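(* For all $n\in\mathbb{N}\cup\{0\}$ and $x\in\mathbb{R}$, the physicist's Hermite polynomials satisfy $$|H_n(x)|\le\begin{cases}n^{n/2}(4\sqrt2)^n\left(1+\frac n2\right),&\text{if }|x|\le\sqrt{2n},\\ 2^{2n}|x|^n\left(1+\frac n2\right),&\text{if }|x|>\sqrt{2n},\end{cases}$$ where $0^0:=1$. In particular, $$|H_n(x)|\le4^n\left(1+\frac n2\right)\left(2^{n/2}n^{n/2}+|x|^n\right).$$
   Context: $H_n$ denotes the $n$-th physicist's Hermite polynomial, $H_n(x)=\sum_{m=0}^{\lfloor n/2\rfloor}\frac{(-1)^m n!}{m!(n-2m)!}(2x)^{n-2m}$. *)

theory Defs
  imports Complex_Main
begin

definition hermite :: "nat \<Rightarrow> real \<Rightarrow> real" where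
  "hermite n x = (\<Sum>m\<le>n div 2. (-1) ^ m * fact n / (fact m * fact (n - 2 * m)) * (2 * x) ^ (n - 2 * m))"

end

theory Submission
  imports Defs
begin

text \<open>Writing \<open>n!/(m!(n-2m)!) = C(n,2m) (2m)!/m!\<close> and using \<open>C(n,2m) \<le> 2^n\<close> and
  \<open>(2m)!/m! \<le> (2m)^m \<le> n^m\<close>, the \<open>m\<close>-th term of \<open>H\<^sub>n(x)\<close> is at most
  \<open>2^n (\<surd>n)^2m (2|x|)^(n-2m) \<le> 2^n c^n\<close> for any \<open>c \<ge> max \<surd>n (2|x|)\<close>, and there are
  at most \<open>1 + n/2\<close> terms. The two regimes correspond to \<open>c = 2\<surd>(2n)\<close> and \<open>c = 2|x|\<close>.\<close>

lemma fact_le_pow2_mult_fact_fact: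
  fixes n m :: nat
  assumes "2 * m \<le> n"
  shows "fact n \<le> 2 ^ n * n ^ m * fact m * fact (n - 2 * m)"
proof -
  have "fact (2 * m) = fact m * (((2 * m) choose m) * fact m)"
    using binomial_fact_lemma[of m "2 * m"] by (simp add: mult.commute mult.left_commute)
  also have "\<dots> \<le> fact m * (2 * m) ^ m"
    using binomial_fact_pow[of "2 * m" m] by simp
  also have "\<dots> \<le> fact m * n ^ m"
    using assms by (intro mult_left_mono power_mono) auto
  finally have fact_double: "fact (2 * m) \<le> fact m * n ^ m" .
  have "fact n = fact (2 * m) * fact (n - 2 * m) * (n choose (2 * m))"
    using binomial_fact_lemma[OF assms] by simp
  also have "\<dots> \<le> (fact m * n ^ m) * fact (n - 2 * m) * 2 ^ n"
    using fact_double binomial_le_pow2[of n "2 * m"] by (intro mult_mono) auto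
  finally show ?thesis by (simp add: mult_ac)
qed

lemma fact_div_fact_fact_le:
  fixes n m :: nat
  assumes "2 * m \<le> n"
  shows "fact n / (fact m * fact (n - 2 * m)) \<le> (2 ^ n * real n ^ m :: real)"
proof -
  have "(fact n :: real) \<le> 2 ^ n * real n ^ m * fact m * fact (n - 2 * m)"
    using of_nat_mono[OF fact_le_pow2_mult_fact_fact[OF assms], where 'a = real]
    by (simp only: of_nat_fact of_nat_mult of_nat_power of_nat_numeral)
  then show ?thesis
    by (simp add: divide_le_eq mult.assoc)
qed

lemma mult_power_le_power_add:
  fixes a b c :: "'a :: linordered_semidom"
  assumes "0 \<le> a" "a \<le> c" "0 \<le> b" "b \<le> c"
  shows "a ^ i * b ^ j \<le> c ^ (i + j)"
  unfolding power_add using assms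
  by (intro mult_mono power_mono zero_le_power) (auto intro: order_trans)

lemma abs_hermite_le_pow:
  fixes n :: nat and x c :: real
  assumes "sqrt (real n) \<le> c" "2 * \<bar>x\<bar> \<le> c"
  shows "\<bar>hermite n x\<bar> \<le> 2 ^ n * c ^ n * (1 + real n / 2)"
proof -
  have term_le: "\<bar>(-1) ^ m * fact n / (fact m * fact (n - 2 * m)) * (2 * x) ^ (n - 2 * m)\<bar>
      \<le> 2 ^ n * c ^ n" if "2 * m \<le> n" for m
  proof -
    have "\<bar>(-1) ^ m * fact n / (fact m * fact (n - 2 * m)) * (2 * x) ^ (n - 2 * m)\<bar>
        = fact n / (fact m * fact (n - 2 * m)) * (2 * \<bar>x\<bar>) ^ (n - 2 * m)"
      by (simp add: abs_mult power_abs)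
    also have "\<dots> \<le> 2 ^ n * real n ^ m * (2 * \<bar>x\<bar>) ^ (n - 2 * m)"
      using fact_div_fact_fact_le[OF that] by (intro mult_right_mono) auto
    also have "\<dots> = 2 ^ n * (sqrt (real n) ^ (2 * m) * (2 * \<bar>x\<bar>) ^ (n - 2 * m))"
      by (simp add: power_mult)
    also have "\<dots> \<le> 2 ^ n * c ^ n"
      using mult_power_le_power_add[OF _ assms(1) _ assms(2), of "2 * m" "n - 2 * m"] that
      by simp
    finally show ?thesis .
  qed
  have "\<bar>hermite n x\<bar>
      \<le> (\<Sum>m\<le>n div 2. \<bar>(-1) ^ m * fact n / (fact m * fact (n - 2 * m)) * (2 * x) ^ (n - 2 * m)\<bar>)"
    unfolding hermite_def by (rule sum_abs)
  also have "\<dots> \<le> (\<Sum>m\<le>n div 2. 2 ^ n * c ^ n)"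
    by (intro sum_mono term_le) auto
  also have "\<dots> = 2 ^ n * c ^ n * real (n div 2 + 1)"
    by simp
  also have "\<dots> \<le> 2 ^ n * c ^ n * (1 + real n / 2)"
    using assms by (intro mult_left_mono) (auto intro: order_trans[OF real_sqrt_ge_zero])
  finally show ?thesis .
qed

theorem lemma4p3:
  fixes n :: nat and x :: real
  shows "\<bar>hermite n x\<bar> \<le>
           (if \<bar>x\<bar> \<le> sqrt (2 * real n)
            then sqrt (real n) ^ n * (4 * sqrt 2) ^ n * (1 + real n / 2)
            else 2 ^ (2 * n) * \<bar>x\<bar> ^ n * (1 + real n / 2))
       \<and> \<bar>hermite n x\<bar> \<le> 4 ^ n * (1 + real n / 2) * (sqrt 2 ^ n * sqrt (real n) ^ n + \<bar>x\<bar> ^ n)"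
proof (cases "\<bar>x\<bar> \<le> sqrt (2 * real n)")
  case True
  have "1 \<le> 2 * sqrt (2 :: real)"
    using real_sqrt_ge_one[of 2] by linarith
  then have "sqrt (real n) \<le> 2 * sqrt 2 * sqrt (real n)"
    using mult_right_mono[of 1 "2 * sqrt 2" "sqrt (real n)"] by simp
  moreover have "2 * \<bar>x\<bar> \<le> 2 * sqrt 2 * sqrt (real n)"
    using True by (simp add: real_sqrt_mult)
  ultimately have "\<bar>hermite n x\<bar> \<le> 2 ^ n * (2 * sqrt 2 * sqrt (real n)) ^ n * (1 + real n / 2)"
    by (rule abs_hermite_le_pow)
  then have "\<bar>hermite n x\<bar> \<le> 4 ^ n * (1 + real n / 2) * (sqrt 2 ^ n * sqrt (real n) ^ n)"
    using power_mult_distrib[of "2 :: real" 2 n] by (simp add: power_mult_distrib mult_ac)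
  then show ?thesis
    using True by (auto simp: power_mult_distrib mult_ac elim!: order_trans)
next
  case False
  then have "real n \<le> x\<^sup>2"
    using real_sqrt_le_iff[of "2 * real n" "x\<^sup>2"] by auto
  then have "sqrt (real n) \<le> 2 * \<bar>x\<bar>"
    using real_sqrt_le_mono[of "real n" "x\<^sup>2"] by simp
  from abs_hermite_le_pow[OF this order_refl]
  have "\<bar>hermite n x\<bar> \<le> 4 ^ n * (1 + real n / 2) * \<bar>x\<bar> ^ n"
    using power_mult_distrib[of "2 :: real" 2 n] by (simp add: power_mult_distrib mult_ac)
  then show ?thesis
    using False power_mult[of "2 :: real" 2 n] by (auto simp: mult_ac elim!: order_trans)
qed

end
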